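(* Let $G$ be a finite simple graph and $k$ a positive integer. Let $G'$ be the graph formed from $G$ by adding a vertex-disjoint copy of the complete bipartite graph $K_{k-1,2k}$, and let $G^\phi_k$ be the complement of $G'$. Then $G$ contains $K_{k,k}$ as a subgraph if and only if $\widetilde{\alpha}(G^\phi_k) \ge 2k$.
   Context: For disjoint vertex sets $S,T$, $E(S,T)$ is the set of edges with one end in $S$ and one in $T$. An $(s,t)$-bipartite-hole in a graph $F$ consists of two disjoint sets of vertices $S,T$ with $|S|=s$, $|T|=t$ and $E(S,T)=\emptyset$. The bipartite-hole-number $\widetilde{\alpha}(F)$ is the least integer $r$ which can be written as $r=s+t-1$ for some positive integers $s,t$ such that $F$ contains no $(s,t)$-bipartite-hole; equivalently the maximum $r$ such that $F$ has an $(s,t)$-bipartite-hole for all non-negative integers $s,t$ with $s+t=r$. $K_{a,b}$ denotes the complete bipartite graph with parts of sizes $a$ and $b$. *)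

theory Defs
  imports Main
begin

definition simple_graph :: "'a set \<Rightarrow> ('a \<Rightarrow> 'a \<Rightarrow> bool) \<Rightarrow> bool" where
  "simple_graph V E \<longleftrightarrow> finite V \<and> (\<forall>u v. E u v \<longrightarrow> E v u)
     \<and> (\<forall>u. \<not> E u u) \<and> (\<forall>u v. E u v \<longrightarrow> u \<in> V \<and> v \<in> V)"

definition contains_Kab :: "'a set \<Rightarrow> ('a \<Rightarrow> 'a \<Rightarrow> bool) \<Rightarrow> nat \<Rightarrow> nat \<Rightarrow> bool" where
  "contains_Kab V E a b \<longleftrightarrow> (\<exists>A B. A \<subseteq> V \<and> B \<subseteq> V \<and> A \<inter> B = {} \<and>
      card A = a \<and> card B = b \<and> (\<forall>x\<in>A. \<forall>y\<in>B. E x y))"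

definition bip_hole :: "'a set \<Rightarrow> ('a \<Rightarrow> 'a \<Rightarrow> bool) \<Rightarrow> nat \<Rightarrow> nat \<Rightarrow> bool" where
  "bip_hole V E s t \<longleftrightarrow> (\<exists>S T. S \<subseteq> V \<and> T \<subseteq> V \<and> S \<inter> T = {} \<and>
      card S = s \<and> card T = t \<and> (\<forall>x\<in>S. \<forall>y\<in>T. \<not> E x y))"

definition bip_hole_number :: "'a set \<Rightarrow> ('a \<Rightarrow> 'a \<Rightarrow> bool) \<Rightarrow> nat" where
  "bip_hole_number V E = (LEAST r. \<exists>s t. 1 \<le> s \<and> 1 \<le> t \<and> r = s + t - 1 \<and> \<not> bip_hole V E s t)"

definition Kab_vertices :: "nat \<Rightarrow> nat \<Rightarrow> nat set" where
  "Kab_vertices a b = {0..<a+b}"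

definition Kab_edge :: "nat \<Rightarrow> nat \<Rightarrow> nat \<Rightarrow> nat \<Rightarrow> bool" where
  "Kab_edge a b i j \<longleftrightarrow> (i < a \<and> a \<le> j \<and> j < a + b) \<or> (j < a \<and> a \<le> i \<and> i < a + b)"

definition union_vertices :: "'a set \<Rightarrow> 'b set \<Rightarrow> ('a + 'b) set" where
  "union_vertices V W = Inl ` V \<union> Inr ` W"

fun union_edge :: "('a \<Rightarrow> 'a \<Rightarrow> bool) \<Rightarrow> ('b \<Rightarrow> 'b \<Rightarrow> bool) \<Rightarrow> 'a + 'b \<Rightarrow> 'a + 'b \<Rightarrow> bool" where
  "union_edge E F (Inl x) (Inl y) = E x y"
| "union_edge E F (Inr x) (Inr y) = F x y"
| "union_edge E F _ _ = False"

definition compl_edge :: "'a set \<Rightarrow> ('a \<Rightarrow> 'a \<Rightarrow> bool) \<Rightarrow> 'a \<Rightarrow> 'a \<Rightarrow> bool" where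
  "compl_edge V E u v \<longleftrightarrow> u \<in> V \<and> v \<in> V \<and> u \<noteq> v \<and> \<not> E u v"

definition Gphi_vertices :: "'a set \<Rightarrow> nat \<Rightarrow> ('a + nat) set" where
  "Gphi_vertices V k = union_vertices V (Kab_vertices (k - 1) (2 * k))"

definition Gphi_edge :: "'a set \<Rightarrow> ('a \<Rightarrow> 'a \<Rightarrow> bool) \<Rightarrow> nat \<Rightarrow> ('a + nat) \<Rightarrow> ('a + nat) \<Rightarrow> bool" where
  "Gphi_edge V E k = compl_edge (Gphi_vertices V k) (union_edge E (Kab_edge (k - 1) (2 * k)))"

end

theory Submission
  imports Defs
begin

text \<open>A bipartite hole of the complement of a graph is a complete bipartite subgraph of the
  graph itself. In the disjoint union \<open>G + K_{k-1,2k}\<close> a complete bipartite subgraph with both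
  sides nonempty lies in one component, and \<open>K_{k-1,2k}\<close> contains \<open>K_{s,t}\<close> exactly when
  \<open>min s t \<le> k - 1\<close> and \<open>max s t \<le> 2k\<close>. Among all \<open>s, t \<ge> 1\<close> with \<open>s + t \<le> 2k\<close> this
  misses only \<open>s = t = k\<close>, which therefore has to be supplied by \<open>G\<close>.\<close>

lemma bip_hole_number_ge_iff:
  assumes "finite V"
  shows "n \<le> bip_hole_number V E \<longleftrightarrow>
    (\<forall>s t. 1 \<le> s \<longrightarrow> 1 \<le> t \<longrightarrow> s + t - 1 < n \<longrightarrow> bip_hole V E s t)"
proof -
  let ?P = "\<lambda>r. \<exists>s t. 1 \<le> s \<and> 1 \<le> t \<and> r = s + t - 1 \<and> \<not> bip_hole V E s t"
  have "\<not> bip_hole V E (card V + 1) 1"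
    using card_mono[OF assms] unfolding bip_hole_def by fastforce
  then have "?P (card V + 1)"
    by force
  then have least: "?P (bip_hole_number V E)"
    unfolding bip_hole_number_def by (rule LeastI)
  show ?thesis
  proof
    assume n: "n \<le> bip_hole_number V E"
    show "\<forall>s t. 1 \<le> s \<longrightarrow> 1 \<le> t \<longrightarrow> s + t - 1 < n \<longrightarrow> bip_hole V E s t"
    proof (intro allI impI)
      fix s t assume st: "1 \<le> s" "1 \<le> t" "s + t - 1 < n"
      show "bip_hole V E s t"
      proof (rule ccontr)
        assume "\<not> bip_hole V E s t"
        with st(1,2) have "bip_hole_number V E \<le> s + t - 1"
          unfolding bip_hole_number_def by (intro Least_le) blast
        with n st(3) show False by simp
      qed
    qed
  next
    assume holes: "\<forall>s t. 1 \<le> s \<longrightarrow> 1 \<le> t \<longrightarrow> s + t - 1 < n \<longrightarrow> bip_hole V E s t"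
    from least obtain s t where st: "1 \<le> s" "1 \<le> t" "bip_hole_number V E = s + t - 1"
      "\<not> bip_hole V E s t" by blast
    show "n \<le> bip_hole_number V E"
    proof (rule ccontr)
      assume "\<not> n \<le> bip_hole_number V E"
      with st(3) have "s + t - 1 < n" by simp
      with holes st(1,2,4) show False by blast
    qed
  qed
qed

lemma bip_hole_compl_edge_iff:
  "bip_hole V (compl_edge V E) s t \<longleftrightarrow> contains_Kab V E s t"
proof
  assume "bip_hole V (compl_edge V E) s t"
  then obtain S T where ST: "S \<subseteq> V" "T \<subseteq> V" "S \<inter> T = {}" "card S = s" "card T = t"
    "\<forall>x\<in>S. \<forall>y\<in>T. \<not> compl_edge V E x y"
    unfolding bip_hole_def by blast
  have "\<forall>x\<in>S. \<forall>y\<in>T. E x y"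
    using ST(1,2,3,6) unfolding compl_edge_def by blast
  with ST(1-5) show "contains_Kab V E s t"
    unfolding contains_Kab_def by blast
next
  assume "contains_Kab V E s t"
  then obtain S T where ST: "S \<subseteq> V" "T \<subseteq> V" "S \<inter> T = {}" "card S = s" "card T = t"
    "\<forall>x\<in>S. \<forall>y\<in>T. E x y"
    unfolding contains_Kab_def by blast
  have "\<forall>x\<in>S. \<forall>y\<in>T. \<not> compl_edge V E x y"
    using ST(6) unfolding compl_edge_def by blast
  with ST(1-5) show "bip_hole V (compl_edge V E) s t"
    unfolding bip_hole_def by blast
qed

lemma contains_Kab_image:
  assumes "contains_Kab V E a b" "inj f" "f ` V \<subseteq> V'" "\<And>x y. E x y \<Longrightarrow> E' (f x) (f y)"
  shows "contains_Kab V' E' a b"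
proof -
  obtain A B where AB: "A \<subseteq> V" "B \<subseteq> V" "A \<inter> B = {}" "card A = a" "card B = b"
    "\<forall>x\<in>A. \<forall>y\<in>B. E x y"
    using assms(1) unfolding contains_Kab_def by blast
  show ?thesis
    unfolding contains_Kab_def
  proof (intro exI conjI)
    show "f ` A \<subseteq> V'" "f ` B \<subseteq> V'"
      using AB(1,2) assms(3) by blast+
    show "f ` A \<inter> f ` B = {}"
      using AB(3) assms(2) by (simp add: image_Int[symmetric])
    show "card (f ` A) = a" "card (f ` B) = b"
      using AB(4,5) assms(2) by (simp_all add: card_image inj_on_subset)
    show "\<forall>x\<in>f ` A. \<forall>y\<in>f ` B. E' x y"
      using AB(6) assms(4) by blast
  qed
qed

lemma contains_Kab_vimage:
  assumes "inj f" "S \<subseteq> f ` V" "T \<subseteq> f ` V" "S \<inter> T = {}" "\<forall>x\<in>S. \<forall>y\<in>T. E' x y"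
    "\<And>x y. E' (f x) (f y) \<Longrightarrow> E x y"
  shows "contains_Kab V E (card S) (card T)"
proof -
  have "f -` S \<subseteq> V" "f -` T \<subseteq> V"
    using assms(1-3) by (auto dest: injD)
  moreover have "card (f -` S) = card S" "card (f -` T) = card T"
    using assms(1-3) by (auto intro!: card_vimage_inj)
  ultimately show ?thesis
    unfolding contains_Kab_def using assms(4-6)
    by (intro exI[of _ "f -` S"] exI[of _ "f -` T"]) auto
qed

lemma contains_Kab_union_iff:
  assumes "1 \<le> s" "1 \<le> t"
  shows "contains_Kab (union_vertices V W) (union_edge E F) s t \<longleftrightarrow>
    contains_Kab V E s t \<or> contains_Kab W F s t"
proof
  assume "contains_Kab (union_vertices V W) (union_edge E F) s t"
  then obtain S T where ST: "S \<subseteq> union_vertices V W" "T \<subseteq> union_vertices V W"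
    "S \<inter> T = {}" "card S = s" "card T = t" "\<forall>x\<in>S. \<forall>y\<in>T. union_edge E F x y"
    unfolding contains_Kab_def by blast
  obtain x0 y0 where x0: "x0 \<in> S" and y0: "y0 \<in> T"
    using ST(4,5) assms by fastforce
  have same_side: "(\<exists>a. u = Inl a) \<longleftrightarrow> (\<exists>b. v = Inl b)" if "union_edge E F u v" for u v
    using that by (cases u; cases v) auto
  show "contains_Kab V E s t \<or> contains_Kab W F s t"
  proof (cases "\<exists>a. x0 = Inl a")
    case True
    then have "\<exists>b. y0 = Inl b" using same_side ST(6) x0 y0 by blast
    then have "S \<subseteq> Inl ` V" "T \<subseteq> Inl ` V"
      using same_side ST(1,2,6) x0 y0 True unfolding union_vertices_def by blast+
    then have "contains_Kab V E s t"
      using contains_Kab_vimage[of Inl S V T "union_edge E F" E] ST by simp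
    then show ?thesis ..
  next
    case False
    then have "\<not> (\<exists>b. y0 = Inl b)" using same_side ST(6) x0 y0 by blast
    then have "S \<subseteq> Inr ` W" "T \<subseteq> Inr ` W"
      using same_side ST(1,2,6) x0 y0 False unfolding union_vertices_def by blast+
    then have "contains_Kab W F s t"
      using contains_Kab_vimage[of Inr S W T "union_edge E F" F] ST by simp
    then show ?thesis ..
  qed
next
  assume "contains_Kab V E s t \<or> contains_Kab W F s t"
  then show "contains_Kab (union_vertices V W) (union_edge E F) s t"
  proof
    assume "contains_Kab V E s t"
    then show ?thesis
      by (rule contains_Kab_image) (auto simp: union_vertices_def)
  next
    assume "contains_Kab W F s t"
    then show ?thesis
      by (rule contains_Kab_image) (auto simp: union_vertices_def)
  qed
qed

lemma contains_Kab_complete_bipartite_iff: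
  assumes "1 \<le> s" "1 \<le> t"
  shows "contains_Kab (Kab_vertices a b) (Kab_edge a b) s t \<longleftrightarrow>
    (s \<le> a \<and> t \<le> b) \<or> (s \<le> b \<and> t \<le> a)"
proof
  assume "contains_Kab (Kab_vertices a b) (Kab_edge a b) s t"
  then obtain S T where ST: "S \<subseteq> {0..<a+b}" "T \<subseteq> {0..<a+b}" "card S = s" "card T = t"
    "\<forall>x\<in>S. \<forall>y\<in>T. Kab_edge a b x y"
    unfolding contains_Kab_def Kab_vertices_def by blast
  obtain x0 y0 where x0: "x0 \<in> S" and y0: "y0 \<in> T"
    using ST(3,4) assms by fastforce
  \<comment> \<open>the part containing \<open>x0\<close> forces \<open>T\<close> into the other part, and then \<open>y0\<close> does the same for \<open>S\<close>\<close>
  show "(s \<le> a \<and> t \<le> b) \<or> (s \<le> b \<and> t \<le> a)"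
  proof (cases "x0 < a")
    case True
    then have "a \<le> y0"
      using ST(5) x0 y0 by (auto simp: Kab_edge_def)
    then have "T \<subseteq> {a..<a+b}" "S \<subseteq> {0..<a}"
      using True ST(5) x0 y0 by (fastforce simp: Kab_edge_def)+
    then show ?thesis
      using ST(3,4) card_mono[of "{0..<a}" S] card_mono[of "{a..<a+b}" T] by simp
  next
    case False
    then have "y0 < a"
      using ST(5) x0 y0 by (auto simp: Kab_edge_def)
    then have "T \<subseteq> {0..<a}" "S \<subseteq> {a..<a+b}"
      using False ST(5) x0 y0 by (fastforce simp: Kab_edge_def)+
    then show ?thesis
      using ST(3,4) card_mono[of "{a..<a+b}" S] card_mono[of "{0..<a}" T] by simp
  qed
next
  assume "(s \<le> a \<and> t \<le> b) \<or> (s \<le> b \<and> t \<le> a)"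
  then show "contains_Kab (Kab_vertices a b) (Kab_edge a b) s t"
  proof
    assume "s \<le> a \<and> t \<le> b"
    then show ?thesis
      unfolding contains_Kab_def Kab_vertices_def
      by (intro exI[of _ "{0..<s}"] exI[of _ "{a..<a+t}"]) (auto simp: Kab_edge_def)
  next
    assume "s \<le> b \<and> t \<le> a"
    then show ?thesis
      unfolding contains_Kab_def Kab_vertices_def
      by (intro exI[of _ "{a..<a+s}"] exI[of _ "{0..<t}"]) (auto simp: Kab_edge_def)
  qed
qed

lemma all_pairs_below_double_iff_diagonal:
  fixes k :: nat
  assumes "1 \<le> k"
  shows "(\<forall>s t. 1 \<le> s \<longrightarrow> 1 \<le> t \<longrightarrow> s + t - 1 < 2 * k \<longrightarrow>
           P s t \<or> (s \<le> k - 1 \<and> t \<le> 2 * k) \<or> (s \<le> 2 * k \<and> t \<le> k - 1))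
         \<longleftrightarrow> P k k"
proof
  assume holes: "\<forall>s t. 1 \<le> s \<longrightarrow> 1 \<le> t \<longrightarrow> s + t - 1 < 2 * k \<longrightarrow>
    P s t \<or> (s \<le> k - 1 \<and> t \<le> 2 * k) \<or> (s \<le> 2 * k \<and> t \<le> k - 1)"
  have "k + k - 1 < 2 * k" "\<not> k \<le> k - 1"
    using assms by auto
  then show "P k k"
    using holes[rule_format, OF assms assms] by blast
next
  assume "P k k"
  show "\<forall>s t. 1 \<le> s \<longrightarrow> 1 \<le> t \<longrightarrow> s + t - 1 < 2 * k \<longrightarrow>
    P s t \<or> (s \<le> k - 1 \<and> t \<le> 2 * k) \<or> (s \<le> 2 * k \<and> t \<le> k - 1)"
  proof (intro allI impI)
    fix s t assume "1 \<le> s" "1 \<le> t" "s + t - 1 < 2 * k"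
    then consider "s = k" "t = k" | "s \<le> k - 1" "t \<le> 2 * k" | "s \<le> 2 * k" "t \<le> k - 1"
      by linarith
    then show "P s t \<or> (s \<le> k - 1 \<and> t \<le> 2 * k) \<or> (s \<le> 2 * k \<and> t \<le> k - 1)"
      using \<open>P k k\<close> by cases auto
  qed
qed

theorem lemma12:
  fixes V :: "'a set" and E :: "'a \<Rightarrow> 'a \<Rightarrow> bool" and k :: nat
  assumes "simple_graph V E" and "1 \<le> k"
  shows "contains_Kab V E k k \<longleftrightarrow>
         bip_hole_number (Gphi_vertices V k) (Gphi_edge V E k) \<ge> 2 * k"
proof -
  have "finite (Gphi_vertices V k)"
    using assms(1) by (simp add: simple_graph_def Gphi_vertices_def union_vertices_def
        Kab_vertices_def)
  then have "bip_hole_number (Gphi_vertices V k) (Gphi_edge V E k) \<ge> 2 * k \<longleftrightarrow>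
    (\<forall>s t. 1 \<le> s \<longrightarrow> 1 \<le> t \<longrightarrow> s + t - 1 < 2 * k \<longrightarrow>
       contains_Kab V E s t \<or> (s \<le> k - 1 \<and> t \<le> 2 * k) \<or> (s \<le> 2 * k \<and> t \<le> k - 1))"
    by (simp add: bip_hole_number_ge_iff Gphi_edge_def bip_hole_compl_edge_iff
        contains_Kab_union_iff contains_Kab_complete_bipartite_iff Gphi_vertices_def
        cong: conj_cong)
  also have "\<dots> \<longleftrightarrow> contains_Kab V E k k"
    using assms(2) by (rule all_pairs_below_double_iff_diagonal)
  finally show ?thesis by (rule sym)
qed

end
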